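(* Let $H=\varprojlim\langle\{H_n\}_{n\in\mathbb{N}},\{h^n_k\}_{k<n}\rangle$ be a profinite poset and let $\mathbb{P}=\varprojlim\langle\{P_n\}_{n\in\mathbb{N}},\{p^n_k\}_{k<n}\rangle$, where $\langle\{P_n\},\{p^n_k\}\rangle$ is a Fraïssé sequence in the category of finite posets with quotient maps. Then there is a continuous quotient map $f:\mathbb{P}\to H$.
   Context: A quotient map between posets is a surjective order-preserving map $\phi:A\to B$ such that for all $p\le r$ in $B$ there are $x\le y$ in $A$ with $\phi(x)=p,\phi(y)=r$. A profinite poset is an inverse limit $\varprojlim\langle\{P_n\},\{p^m_k\}\rangle=\{(x_n)\in\prod_n P_n:p^{n+1}_n(x_{n+1})=x_n\ \forall n\}$ of nonempty finite posets $P_n$ with quotient maps $p^m_k:P_m\to P_k$ ($k<m$) satisfying $p^k_l\circ p^m_k=p^m_l$, ordered coordinatewise and topologized as a subspace of the product of discrete spaces. Such a sequence is a Fraïssé sequence if (U) for every finite poset $X$ there are $n$ and a quotient map $P_n\to X$, and (A) for every $k$, every finite poset $Y$ and quotient map $f:Y\to P_k$ there exist $\ell>k$ and a quotient map $g:P_\ell\to Y$ with $f\circ g=p^\ell_k$. *)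

theory Defs
  imports "HOL-Analysis.Analysis"
begin

text \<open>A poset is given by a carrier set together with an order relation (only its
restriction to the carrier matters).\<close>
type_synonym 'a poset = "'a set \<times> ('a \<Rightarrow> 'a \<Rightarrow> bool)"

definition is_poset :: "'a poset \<Rightarrow> bool" where
  "is_poset P \<longleftrightarrow>
     (\<forall>x\<in>fst P. snd P x x) \<and>
     (\<forall>x\<in>fst P. \<forall>y\<in>fst P. snd P x y \<and> snd P y x \<longrightarrow> x = y) \<and>
     (\<forall>x\<in>fst P. \<forall>y\<in>fst P. \<forall>z\<in>fst P. snd P x y \<and> snd P y z \<longrightarrow> snd P x z)"

definition fin_poset :: "'a poset \<Rightarrow> bool" where
  "fin_poset P \<longleftrightarrow> is_poset P \<and> finite (fst P) \<and> fst P \<noteq> {}"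

definition poset_quotient_map :: "'a poset \<Rightarrow> 'b poset \<Rightarrow> ('a \<Rightarrow> 'b) \<Rightarrow> bool" where
  "poset_quotient_map A B f \<longleftrightarrow>
     f ` fst A = fst B \<and>
     (\<forall>x\<in>fst A. \<forall>y\<in>fst A. snd A x y \<longrightarrow> snd B (f x) (f y)) \<and>
     (\<forall>p\<in>fst B. \<forall>r\<in>fst B. snd B p r \<longrightarrow>
        (\<exists>x\<in>fst A. \<exists>y\<in>fst A. snd A x y \<and> f x = p \<and> f y = r))"

definition inverse_seq :: "(nat \<Rightarrow> 'a poset) \<Rightarrow> (nat \<Rightarrow> nat \<Rightarrow> 'a \<Rightarrow> 'a) \<Rightarrow> bool" where
  "inverse_seq P p \<longleftrightarrow>
     (\<forall>n. fin_poset (P n)) \<and>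
     (\<forall>k m. k < m \<longrightarrow> poset_quotient_map (P m) (P k) (p m k)) \<and>
     (\<forall>l k m. l < k \<and> k < m \<longrightarrow> (\<forall>x\<in>fst (P m). p k l (p m k x) = p m l x))"

definition invlim_set :: "(nat \<Rightarrow> 'a poset) \<Rightarrow> (nat \<Rightarrow> nat \<Rightarrow> 'a \<Rightarrow> 'a) \<Rightarrow> (nat \<Rightarrow> 'a) set" where
  "invlim_set P p = {x. (\<forall>n. x n \<in> fst (P n)) \<and> (\<forall>n. p (Suc n) n (x (Suc n)) = x n)}"

definition invlim :: "(nat \<Rightarrow> 'a poset) \<Rightarrow> (nat \<Rightarrow> nat \<Rightarrow> 'a \<Rightarrow> 'a) \<Rightarrow> (nat \<Rightarrow> 'a) poset" where
  "invlim P p = (invlim_set P p, (\<lambda>x y. \<forall>n. snd (P n) (x n) (y n)))"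

definition invlim_top :: "(nat \<Rightarrow> 'a poset) \<Rightarrow> (nat \<Rightarrow> nat \<Rightarrow> 'a \<Rightarrow> 'a) \<Rightarrow> (nat \<Rightarrow> 'a) topology" where
  "invlim_top P p =
     subtopology (product_topology (\<lambda>n. discrete_topology (fst (P n))) UNIV) (invlim_set P p)"

text \<open>Fraisse sequence. "Every finite poset" is rendered as every nonempty finite poset
  whose carrier is a set of natural numbers (every finite poset is isomorphic to one).\<close>
definition fraisse_seq :: "(nat \<Rightarrow> 'a poset) \<Rightarrow> (nat \<Rightarrow> nat \<Rightarrow> 'a \<Rightarrow> 'a) \<Rightarrow> bool" where
  "fraisse_seq P p \<longleftrightarrow>
     inverse_seq P p \<and>
     (\<forall>X :: nat poset. fin_poset X \<longrightarrow> (\<exists>n q. poset_quotient_map (P n) X q)) \<and>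
     (\<forall>k. \<forall>Y :: nat poset. \<forall>f. fin_poset Y \<and> poset_quotient_map Y (P k) f \<longrightarrow>
        (\<exists>l g. l > k \<and> poset_quotient_map (P l) Y g \<and> (\<forall>x\<in>fst (P l). f (g x) = p l k x)))"

end

theory Submission
  imports Defs
begin

text \<open>
Pick levels \<open>n_0 < n_1 < \<dots>\<close> of the Fraisse sequence and quotient maps \<open>F_k : P_{n_k} \<rightarrow> H_k\<close>
such that \<open>x \<mapsto> (p^{n_{k+1}}_{n_k} x, F_{k+1} x)\<close> maps \<open>P_{n_{k+1}}\<close> quotiently onto the pullback of
\<open>F_k\<close> and \<open>h^{k+1}_k\<close>: the first map exists by universality, and each further one by
amalgamation, applied to the projection of the finite pullback onto \<open>P_{n_k}\<close>. The maps \<open>F_k\<close>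
commute with the bonding maps, so they induce a continuous map of the inverse limits, and the
pullback condition lifts any pair \<open>z \<le> w\<close> of threads of \<open>H\<close> level by level to a pair of
threads of \<open>P\<close>, which makes the induced map a quotient map.
\<close>

lemma is_poset_refl: "is_poset P \<Longrightarrow> x \<in> fst P \<Longrightarrow> snd P x x"
  unfolding is_poset_def by blast

lemma is_poset_antisym:
  "is_poset P \<Longrightarrow> x \<in> fst P \<Longrightarrow> y \<in> fst P \<Longrightarrow> snd P x y \<Longrightarrow> snd P y x \<Longrightarrow> x = y"
  unfolding is_poset_def by blast

lemma is_poset_trans:
  "is_poset P \<Longrightarrow> x \<in> fst P \<Longrightarrow> y \<in> fst P \<Longrightarrow> z \<in> fst P \<Longrightarrow> snd P x y \<Longrightarrow> snd P y z \<Longrightarrow> snd P x z"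
  unfolding is_poset_def by blast

lemma poset_quotient_map_image:
  "poset_quotient_map A B f \<Longrightarrow> f ` fst A = fst B"
  unfolding poset_quotient_map_def by blast

lemma poset_quotient_map_mem:
  "poset_quotient_map A B f \<Longrightarrow> x \<in> fst A \<Longrightarrow> f x \<in> fst B"
  unfolding poset_quotient_map_def by blast

lemma poset_quotient_map_mono:
  "poset_quotient_map A B f \<Longrightarrow> x \<in> fst A \<Longrightarrow> y \<in> fst A \<Longrightarrow> snd A x y \<Longrightarrow> snd B (f x) (f y)"
  unfolding poset_quotient_map_def by blast

lemma poset_quotient_map_liftE:
  assumes "poset_quotient_map A B f" "u \<in> fst B" "v \<in> fst B" "snd B u v"
  obtains x y where "x \<in> fst A" "y \<in> fst A" "snd A x y" "f x = u" "f y = v"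
  using assms unfolding poset_quotient_map_def by blast

lemma poset_quotient_map_cong:
  assumes "poset_quotient_map A B f" "\<And>x. x \<in> fst A \<Longrightarrow> f x = g x"
  shows "poset_quotient_map A B g"
  unfolding poset_quotient_map_def
proof (intro conjI ballI impI)
  have "g ` fst A = f ` fst A" by (rule image_cong) (simp_all add: assms(2))
  then show "g ` fst A = fst B" by (simp add: poset_quotient_map_image[OF assms(1)])
next
  fix x y assume xy: "x \<in> fst A" "y \<in> fst A" "snd A x y"
  then have "snd B (f x) (f y)" by (rule poset_quotient_map_mono[OF assms(1)])
  with xy show "snd B (g x) (g y)" by (simp add: assms(2))
next
  fix u v assume "u \<in> fst B" "v \<in> fst B" "snd B u v"
  then obtain x y where "x \<in> fst A" "y \<in> fst A" "snd A x y" "f x = u" "f y = v"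
    by (rule poset_quotient_map_liftE[OF assms(1)])
  then show "\<exists>x\<in>fst A. \<exists>y\<in>fst A. snd A x y \<and> g x = u \<and> g y = v"
    using assms(2) by metis
qed

lemma poset_quotient_map_comp:
  assumes f: "poset_quotient_map A B f" and g: "poset_quotient_map B C g"
  shows "poset_quotient_map A C (g \<circ> f)"
  unfolding poset_quotient_map_def
proof (intro conjI ballI impI)
  show "(g \<circ> f) ` fst A = fst C"
    using poset_quotient_map_image[OF f] poset_quotient_map_image[OF g]
    by (simp only: image_comp[symmetric])
next
  fix x y assume "x \<in> fst A" "y \<in> fst A" "snd A x y"
  then show "snd C ((g \<circ> f) x) ((g \<circ> f) y)"
    using f g by (simp add: poset_quotient_map_mem poset_quotient_map_mono)
next
  fix u v assume "u \<in> fst C" "v \<in> fst C" "snd C u v"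
  then obtain u' v' where uv: "u' \<in> fst B" "v' \<in> fst B" "snd B u' v'" and "g u' = u" "g v' = v"
    by (rule poset_quotient_map_liftE[OF g])
  from uv obtain x y where "x \<in> fst A" "y \<in> fst A" "snd A x y" "f x = u'" "f y = v'"
    by (rule poset_quotient_map_liftE[OF f])
  with \<open>g u' = u\<close> \<open>g v' = v\<close>
  show "\<exists>x\<in>fst A. \<exists>y\<in>fst A. snd A x y \<and> (g \<circ> f) x = u \<and> (g \<circ> f) y = v"
    by auto
qed

lemma fin_poset_nat_copy:
  assumes "fin_poset A"
  obtains X :: "nat poset" and e where "fin_poset X" "poset_quotient_map X A e"
proof -
  have A: "finite (fst A)" "fst A \<noteq> {}" "is_poset A" using assms unfolding fin_poset_def by auto
  obtain e where e: "bij_betw e {0..<card (fst A)} (fst A)"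
    using ex_bij_betw_nat_finite[OF A(1)] by blast
  define d where "d = inv_into {0..<card (fst A)} e"
  define X where "X = ({0..<card (fst A)}, \<lambda>i j. snd A (e i) (e j))"
  have ed: "e (d a) = a" "d a \<in> fst X" if "a \<in> fst A" for a
    using bij_betw_inv_into_right[OF e that] bij_betw_apply[OF bij_betw_inv_into[OF e] that]
    unfolding d_def X_def by simp_all
  have e_mem: "e i \<in> fst A" if "i \<in> fst X" for i
    using bij_betw_apply[OF e] that unfolding X_def by simp
  have e_inj: "inj_on e (fst X)" using e unfolding X_def by (simp add: bij_betw_def)
  have X_le: "snd X i j \<longleftrightarrow> snd A (e i) (e j)" for i j by (simp add: X_def)
  have "is_poset X"
    using A(3) e_mem inj_onD[OF e_inj] unfolding is_poset_def X_le by meson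
  moreover have "finite (fst X)" "fst X \<noteq> {}" using A unfolding X_def by auto
  ultimately have "fin_poset X" unfolding fin_poset_def by blast
  moreover have "poset_quotient_map X A e"
    unfolding poset_quotient_map_def X_le
  proof (intro conjI ballI impI)
    show "e ` fst X = fst A" using e unfolding X_def by (simp add: bij_betw_def)
  next
    fix u v assume "u \<in> fst A" "v \<in> fst A" "snd A u v"
    then show "\<exists>x\<in>fst X. \<exists>y\<in>fst X. snd A (e x) (e y) \<and> e x = u \<and> e y = v"
      using ed by metis
  qed
  ultimately show ?thesis by (rule that)
qed

lemma inverse_seq_fin_poset: "inverse_seq P p \<Longrightarrow> fin_poset (P n)"
  unfolding inverse_seq_def by blast

lemma inverse_seq_quotient: "inverse_seq P p \<Longrightarrow> k < m \<Longrightarrow> poset_quotient_map (P m) (P k) (p m k)"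
  unfolding inverse_seq_def by blast

lemma inverse_seq_comp:
  "inverse_seq P p \<Longrightarrow> l < k \<Longrightarrow> k < m \<Longrightarrow> x \<in> fst (P m) \<Longrightarrow> p k l (p m k x) = p m l x"
  unfolding inverse_seq_def by blast

section \<open>Pullbacks\<close>

definition poset_pullback ::
    "'a poset \<Rightarrow> 'b poset \<Rightarrow> ('a \<Rightarrow> 'c) \<Rightarrow> ('b \<Rightarrow> 'c) \<Rightarrow> ('a \<times> 'b) poset" where
  "poset_pullback A B f g =
     ({(a, b). a \<in> fst A \<and> b \<in> fst B \<and> f a = g b},
      \<lambda>u v. snd A (fst u) (fst v) \<and> snd B (snd u) (snd v))"

lemma mem_poset_pullback [simp]:
  "(a, b) \<in> fst (poset_pullback A B f g) \<longleftrightarrow> a \<in> fst A \<and> b \<in> fst B \<and> f a = g b"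
  by (simp add: poset_pullback_def)

lemma poset_pullback_le [simp]:
  "snd (poset_pullback A B f g) u v \<longleftrightarrow> snd A (fst u) (fst v) \<and> snd B (snd u) (snd v)"
  by (simp add: poset_pullback_def)

lemma poset_pullback_fst_quotient:
  assumes f: "poset_quotient_map A C f" and g: "poset_quotient_map B C g"
  shows "poset_quotient_map (poset_pullback A B f g) A fst"
  unfolding poset_quotient_map_def poset_pullback_le
proof (intro conjI ballI impI)
  show "fst ` fst (poset_pullback A B f g) = fst A"
  proof (intro equalityI subsetI)
    fix a assume a: "a \<in> fst A"
    then have "f a \<in> g ` fst B" using f g by (simp add: poset_quotient_map_image poset_quotient_map_mem)
    then obtain b where "(a, b) \<in> fst (poset_pullback A B f g)" using a by auto
    then show "a \<in> fst ` fst (poset_pullback A B f g)" by (metis fst_conv image_eqI)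
  qed (auto simp: poset_pullback_def)
next
  fix a a' assume a: "a \<in> fst A" "a' \<in> fst A" "snd A a a'"
  then have "f a \<in> fst C" "f a' \<in> fst C" "snd C (f a) (f a')"
    using f by (simp_all add: poset_quotient_map_mem poset_quotient_map_mono)
  then obtain b b' where "b \<in> fst B" "b' \<in> fst B" "snd B b b'" "g b = f a" "g b' = f a'"
    by (rule poset_quotient_map_liftE[OF g])
  with a show "\<exists>u\<in>fst (poset_pullback A B f g). \<exists>v\<in>fst (poset_pullback A B f g).
      (snd A (fst u) (fst v) \<and> snd B (snd u) (snd v)) \<and> fst u = a \<and> fst v = a'"
    by (intro bexI[of _ "(a, b)"] bexI[of _ "(a', b')"]) simp_all
qed (auto simp: poset_pullback_def)

lemma poset_pullback_snd_quotient:
  assumes f: "poset_quotient_map A C f" and g: "poset_quotient_map B C g"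
  shows "poset_quotient_map (poset_pullback A B f g) B snd"
  unfolding poset_quotient_map_def poset_pullback_le
proof (intro conjI ballI impI)
  show "snd ` fst (poset_pullback A B f g) = fst B"
  proof (intro equalityI subsetI)
    fix b assume b: "b \<in> fst B"
    then have "g b \<in> f ` fst A" using f g by (simp add: poset_quotient_map_image poset_quotient_map_mem)
    then obtain a where "(a, b) \<in> fst (poset_pullback A B f g)" using b by auto
    then show "b \<in> snd ` fst (poset_pullback A B f g)" by (metis snd_conv image_eqI)
  qed (auto simp: poset_pullback_def)
next
  fix b b' assume b: "b \<in> fst B" "b' \<in> fst B" "snd B b b'"
  then have "g b \<in> fst C" "g b' \<in> fst C" "snd C (g b) (g b')"
    using g by (simp_all add: poset_quotient_map_mem poset_quotient_map_mono)
  then obtain a a' where "a \<in> fst A" "a' \<in> fst A" "snd A a a'" "f a = g b" "f a' = g b'"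
    by (rule poset_quotient_map_liftE[OF f])
  with b show "\<exists>u\<in>fst (poset_pullback A B f g). \<exists>v\<in>fst (poset_pullback A B f g).
      (snd A (fst u) (fst v) \<and> snd B (snd u) (snd v)) \<and> snd u = b \<and> snd v = b'"
    by (intro bexI[of _ "(a, b)"] bexI[of _ "(a', b')"]) simp_all
qed (auto simp: poset_pullback_def)

lemma is_poset_pullback:
  assumes A: "is_poset A" and B: "is_poset B"
  shows "is_poset (poset_pullback A B f g)"
  unfolding is_poset_def poset_pullback_def fst_conv snd_conv
  by (auto intro: is_poset_refl[OF A] is_poset_refl[OF B] is_poset_trans[OF A] is_poset_trans[OF B]
      dest: is_poset_antisym[OF A] is_poset_antisym[OF B])

lemma fin_poset_pullback:
  assumes A: "fin_poset A" and B: "fin_poset B"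
    and f: "poset_quotient_map A C f" and g: "poset_quotient_map B C g"
  shows "fin_poset (poset_pullback A B f g)"
proof -
  let ?Q = "poset_pullback A B f g"
  have sub: "fst ?Q \<subseteq> fst A \<times> fst B" by (auto simp: poset_pullback_def)
  then have "finite (fst ?Q)" using A B unfolding fin_poset_def by (meson finite_SigmaI finite_subset)
  moreover have "fst ?Q \<noteq> {}"
    using A poset_quotient_map_image[OF poset_pullback_fst_quotient[OF f g]]
    unfolding fin_poset_def by auto
  moreover have "is_poset ?Q"
    using A B unfolding fin_poset_def by (simp add: is_poset_pullback)
  ultimately show ?thesis unfolding fin_poset_def by blast
qed

section \<open>Fraisse sequences\<close>

lemma fraisse_seq_inverse_seq: "fraisse_seq P p \<Longrightarrow> inverse_seq P p"
  unfolding fraisse_seq_def by blast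

text \<open>The definition of a Fraisse sequence quantifies only over posets on \<open>nat\<close>; composing with
  the quotient map from a copy on \<open>nat\<close> extends both properties to finite posets of any type.\<close>

lemma fraisse_seq_universal:
  assumes P: "fraisse_seq P p" and X: "fin_poset X"
  obtains n q where "poset_quotient_map (P n) X q"
proof -
  obtain Y :: "nat poset" and e where "fin_poset Y" "poset_quotient_map Y X e"
    using fin_poset_nat_copy[OF X] .
  moreover obtain n q where "poset_quotient_map (P n) Y q"
    using P \<open>fin_poset Y\<close> unfolding fraisse_seq_def by blast
  ultimately show ?thesis using that[OF poset_quotient_map_comp] by blast
qed

lemma fraisse_seq_amalgamation:
  assumes P: "fraisse_seq P p" and Y: "fin_poset Y" and f: "poset_quotient_map Y (P k) f"
  obtains l g where "k < l" "poset_quotient_map (P l) Y g" "\<And>x. x \<in> fst (P l) \<Longrightarrow> f (g x) = p l k x"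
proof -
  obtain X :: "nat poset" and e where X: "fin_poset X" "poset_quotient_map X Y e"
    using fin_poset_nat_copy[OF Y] .
  have "poset_quotient_map X (P k) (f \<circ> e)" using X(2) f by (rule poset_quotient_map_comp)
  then obtain l g where "k < l" "poset_quotient_map (P l) X g" "\<forall>x\<in>fst (P l). (f \<circ> e) (g x) = p l k x"
    using P X(1) unfolding fraisse_seq_def by blast
  moreover have "poset_quotient_map (P l) Y (e \<circ> g)"
    using \<open>poset_quotient_map (P l) X g\<close> X(2) by (rule poset_quotient_map_comp)
  ultimately show ?thesis using that by simp
qed

lemma fraisse_seq_pullback_step:
  assumes P: "fraisse_seq P p" and B: "fin_poset B"
    and F: "poset_quotient_map (P n) C F" and g: "poset_quotient_map B C g"
  obtains l F' where "n < l" "poset_quotient_map (P l) B F'"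
    "poset_quotient_map (P l) (poset_pullback (P n) B F g) (\<lambda>x. (p l n x, F' x))"
proof -
  let ?Q = "poset_pullback (P n) B F g"
  have "fin_poset ?Q" using inverse_seq_fin_poset[OF fraisse_seq_inverse_seq[OF P]] B F g by (rule fin_poset_pullback)
  then obtain l G where "n < l" and G: "poset_quotient_map (P l) ?Q G"
    and fst_G: "\<And>x. x \<in> fst (P l) \<Longrightarrow> fst (G x) = p l n x"
    using fraisse_seq_amalgamation[OF P _ poset_pullback_fst_quotient[OF F g]] by blast
  have "poset_quotient_map (P l) B (snd \<circ> G)"
    using G poset_pullback_snd_quotient[OF F g] by (rule poset_quotient_map_comp)
  moreover have "poset_quotient_map (P l) ?Q (\<lambda>x. (p l n x, (snd \<circ> G) x))"
    using G by (rule poset_quotient_map_cong) (simp add: fst_G prod_eq_iff)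
  ultimately show ?thesis using \<open>n < l\<close> that by blast
qed

lemma fraisse_seq_levelwise_quotients:
  assumes H: "inverse_seq H h" and P: "fraisse_seq P p"
  obtains N F where "strict_mono N" "\<And>k. poset_quotient_map (P (N k)) (H k) (F k)"
    "\<And>k. poset_quotient_map (P (N (Suc k)))
           (poset_pullback (P (N k)) (H (Suc k)) (F k) (h (Suc k) k))
           (\<lambda>x. (p (N (Suc k)) (N k) x, F (Suc k) x))"
proof -
  have H_fin: "fin_poset (H k)" and h: "poset_quotient_map (H (Suc k)) (H k) (h (Suc k) k)" for k
    using inverse_seq_fin_poset[OF H] inverse_seq_quotient[OF H lessI] .
  define level where "level k nF \<longleftrightarrow> poset_quotient_map (P (fst nF)) (H k) (snd nF)" for k nF
  define succ where "succ k nF nF' \<longleftrightarrow> fst nF < fst nF' \<and>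
    poset_quotient_map (P (fst nF')) (poset_pullback (P (fst nF)) (H (Suc k)) (snd nF) (h (Suc k) k))
      (\<lambda>x. (p (fst nF') (fst nF) x, snd nF' x))" for k nF nF'
  have "\<exists>G. \<forall>k. level k (G k) \<and> succ k (G k) (G (Suc k))"
  proof (rule dependent_nat_choice)
    obtain n q where "poset_quotient_map (P n) (H 0) q" using fraisse_seq_universal[OF P H_fin] .
    then show "\<exists>nF. level 0 nF" unfolding level_def by auto
  next
    fix nF k assume "level k nF"
    then obtain l F' where "fst nF < l" "poset_quotient_map (P l) (H (Suc k)) F'"
      "poset_quotient_map (P l) (poset_pullback (P (fst nF)) (H (Suc k)) (snd nF) (h (Suc k) k))
         (\<lambda>x. (p l (fst nF) x, F' x))"
      using fraisse_seq_pullback_step[OF P H_fin _ h] unfolding level_def by metis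
    then show "\<exists>nF'. level (Suc k) nF' \<and> succ k nF nF'"
      unfolding level_def succ_def by (intro exI[of _ "(l, F')"]) simp
  qed
  then obtain G where "\<And>k. level k (G k)" "\<And>k. succ k (G k) (G (Suc k))" by blast
  moreover have "strict_mono (fst \<circ> G)"
    using \<open>\<And>k. succ k (G k) (G (Suc k))\<close> by (simp add: strict_mono_Suc_iff succ_def)
  ultimately show ?thesis using that[of "fst \<circ> G" "snd \<circ> G"] unfolding level_def succ_def by simp
qed

section \<open>Inverse limits\<close>

text \<open>The bonding map \<open>p m m\<close> is unspecified, so it is replaced by the identity.\<close>

definition bonding :: "(nat \<Rightarrow> nat \<Rightarrow> 'a \<Rightarrow> 'a) \<Rightarrow> nat \<Rightarrow> nat \<Rightarrow> 'a \<Rightarrow> 'a" where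
  "bonding p m k x = (if m = k then x else p m k x)"

lemma bonding_mem:
  assumes "inverse_seq P p" "k \<le> m" "x \<in> fst (P m)"
  shows "bonding p m k x \<in> fst (P k)"
  using assms poset_quotient_map_mem[OF inverse_seq_quotient[OF assms(1)]]
  by (auto simp: bonding_def)

lemma bonding_mono:
  assumes "inverse_seq P p" "k \<le> m" "x \<in> fst (P m)" "y \<in> fst (P m)" "snd (P m) x y"
  shows "snd (P k) (bonding p m k x) (bonding p m k y)"
  using assms poset_quotient_map_mono[OF inverse_seq_quotient[OF assms(1)]]
  by (auto simp: bonding_def)

lemma bonding_bonding:
  assumes "inverse_seq P p" "l \<le> k" "k \<le> m" "x \<in> fst (P m)"
  shows "bonding p k l (bonding p m k x) = bonding p m l x"
  using assms inverse_seq_comp[OF assms(1)] by (auto simp: bonding_def)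

lemma invlim_set_bonding:
  assumes P: "inverse_seq P p" and x: "x \<in> invlim_set P p" and "k \<le> m"
  shows "bonding p m k (x m) = x k"
  using \<open>k \<le> m\<close>
proof (induction m rule: dec_induct)
  case base
  show ?case by (simp add: bonding_def)
next
  case (step m)
  have x_mem: "x (Suc m) \<in> fst (P (Suc m))" and x_thread: "p (Suc m) m (x (Suc m)) = x m"
    using x unfolding invlim_set_def by auto
  have "bonding p (Suc m) k (x (Suc m)) = bonding p m k (bonding p (Suc m) m (x (Suc m)))"
    using bonding_bonding[OF P step.hyps(1) _ x_mem] by simp
  also have "\<dots> = x k" using x_thread step.IH by (simp add: bonding_def)
  finally show ?case .
qed

lemma invlim_set_extend_subseq:
  assumes P: "inverse_seq P p" and N: "strict_mono N"
    and a_mem: "\<And>j. a j \<in> fst (P (N j))"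
    and a_thread: "\<And>j. p (N (Suc j)) (N j) (a (Suc j)) = a j"
  obtains x where "x \<in> invlim_set P p" "\<And>j. x (N j) = a j"
proof -
  have N_ge: "m \<le> N m" for m using N by (rule strict_mono_imp_increasing)
  have N_mono: "N i \<le> N j" if "i \<le> j" for i j using N that by (simp add: strict_mono_less_eq)
  have a_bonding: "bonding p (N j) (N k) (a j) = a k" if "k \<le> j" for k j
    using that
  proof (induction j rule: dec_induct)
    case base
    show ?case by (simp add: bonding_def)
  next
    case (step j)
    have "N (Suc j) \<noteq> N j" using N by (metis lessI less_irrefl strict_mono_def)
    then have "bonding p (N (Suc j)) (N j) (a (Suc j)) = a j" by (simp add: bonding_def a_thread)
    then show ?case
      using bonding_bonding[OF P N_mono[OF step.hyps(1)] N_mono[of j "Suc j"] a_mem] step.IH by simp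
  qed
  define x where "x m = bonding p (N m) m (a m)" for m
  have "x \<in> invlim_set P p" unfolding invlim_set_def
  proof (intro CollectI conjI allI)
    fix m
    show "x m \<in> fst (P m)" unfolding x_def using bonding_mem[OF P N_ge a_mem] .
    have "p (Suc m) m (x (Suc m)) = bonding p (N (Suc m)) m (a (Suc m))"
      using bonding_bonding[OF P _ N_ge a_mem, of m "Suc m"] by (simp add: x_def bonding_def)
    also have "\<dots> = bonding p (N m) m (bonding p (N (Suc m)) (N m) (a (Suc m)))"
      using bonding_bonding[OF P N_ge N_mono[of m "Suc m"] a_mem] by simp
    also have "\<dots> = x m" using a_bonding[of m "Suc m"] by (simp add: x_def)
    finally show "p (Suc m) m (x (Suc m)) = x m" .
  qed
  moreover have "x (N j) = a j" for j using a_bonding[OF N_ge] by (simp add: x_def)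
  ultimately show ?thesis by (rule that)
qed

section \<open>Maps induced between inverse limits\<close>

locale levelwise_quotient =
  fixes P :: "nat \<Rightarrow> 'a poset" and p :: "nat \<Rightarrow> nat \<Rightarrow> 'a \<Rightarrow> 'a"
    and H :: "nat \<Rightarrow> 'b poset" and h :: "nat \<Rightarrow> nat \<Rightarrow> 'b \<Rightarrow> 'b"
    and N :: "nat \<Rightarrow> nat" and F :: "nat \<Rightarrow> 'a \<Rightarrow> 'b"
  assumes inverse_P: "inverse_seq P p" and inverse_H: "inverse_seq H h"
    and strict_mono_N: "strict_mono N"
    and quotient_level: "\<And>k. poset_quotient_map (P (N k)) (H k) (F k)"
    and quotient_pullback: "\<And>k. poset_quotient_map (P (N (Suc k)))
          (poset_pullback (P (N k)) (H (Suc k)) (F k) (h (Suc k) k))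
          (\<lambda>x. (p (N (Suc k)) (N k) x, F (Suc k) x))"
begin

definition induced :: "(nat \<Rightarrow> 'a) \<Rightarrow> nat \<Rightarrow> 'b" where
  "induced x k = F k (x (N k))"

lemma level_commutes:
  assumes "x \<in> fst (P (N (Suc k)))"
  shows "h (Suc k) k (F (Suc k) x) = F k (p (N (Suc k)) (N k) x)"
  using poset_quotient_map_mem[OF quotient_pullback assms] by simp

lemma induced_mem_invlim_set:
  assumes x: "x \<in> invlim_set P p"
  shows "induced x \<in> invlim_set H h"
  unfolding invlim_set_def
proof (intro CollectI conjI allI)
  have x_mem: "x n \<in> fst (P n)" for n using x unfolding invlim_set_def by blast
  fix k
  show "induced x k \<in> fst (H k)"
    unfolding induced_def using quotient_level x_mem by (rule poset_quotient_map_mem)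
  have "N k < N (Suc k)" using strict_mono_N by (simp add: strict_mono_def)
  then have "p (N (Suc k)) (N k) (x (N (Suc k))) = x (N k)"
    using invlim_set_bonding[OF inverse_P x, of "N k" "N (Suc k)"] by (simp add: bonding_def)
  then show "h (Suc k) k (induced x (Suc k)) = induced x k"
    unfolding induced_def using level_commutes x_mem by simp
qed

lemma induced_mono:
  assumes "x \<in> invlim_set P p" "y \<in> invlim_set P p" "\<And>n. snd (P n) (x n) (y n)"
  shows "snd (H k) (induced x k) (induced y k)"
  using assms unfolding induced_def invlim_set_def by (blast intro: poset_quotient_map_mono[OF quotient_level])

lemma levelwise_lift_pairsE:
  assumes z: "z \<in> invlim_set H h" and w: "w \<in> invlim_set H h"
    and zw: "\<And>n. snd (H n) (z n) (w n)"
  obtains a b where "\<And>k. a k \<in> fst (P (N k))" "\<And>k. b k \<in> fst (P (N k))"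
    "\<And>k. snd (P (N k)) (a k) (b k)" "\<And>k. F k (a k) = z k" "\<And>k. F k (b k) = w k"
    "\<And>k. p (N (Suc k)) (N k) (a (Suc k)) = a k" "\<And>k. p (N (Suc k)) (N k) (b (Suc k)) = b k"
proof -
  have z_mem: "z n \<in> fst (H n)" and z_thread: "h (Suc n) n (z (Suc n)) = z n" for n
    using z unfolding invlim_set_def by auto
  have w_mem: "w n \<in> fst (H n)" and w_thread: "h (Suc n) n (w (Suc n)) = w n" for n
    using w unfolding invlim_set_def by auto
  define over where "over k ab \<longleftrightarrow> fst ab \<in> fst (P (N k)) \<and> snd ab \<in> fst (P (N k)) \<and>
    snd (P (N k)) (fst ab) (snd ab) \<and> F k (fst ab) = z k \<and> F k (snd ab) = w k" for k ab
  have "\<exists>AB. \<forall>k. over k (AB k) \<and>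
      p (N (Suc k)) (N k) (fst (AB (Suc k))) = fst (AB k) \<and>
      p (N (Suc k)) (N k) (snd (AB (Suc k))) = snd (AB k)"
  proof (rule dependent_nat_choice)
    obtain a b where "a \<in> fst (P (N 0))" "b \<in> fst (P (N 0))" "snd (P (N 0)) a b" "F 0 a = z 0" "F 0 b = w 0"
      using quotient_level z_mem w_mem zw by (rule poset_quotient_map_liftE)
    then show "\<exists>ab. over 0 ab" unfolding over_def by auto
  next
    fix ab k assume "over k ab"
    then have "(fst ab, z (Suc k)) \<in> fst (poset_pullback (P (N k)) (H (Suc k)) (F k) (h (Suc k) k))"
      "(snd ab, w (Suc k)) \<in> fst (poset_pullback (P (N k)) (H (Suc k)) (F k) (h (Suc k) k))"
      "snd (poset_pullback (P (N k)) (H (Suc k)) (F k) (h (Suc k) k)) (fst ab, z (Suc k)) (snd ab, w (Suc k))"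
      unfolding over_def by (simp_all add: z_mem w_mem z_thread w_thread zw)
    then obtain a' b' where "a' \<in> fst (P (N (Suc k)))" "b' \<in> fst (P (N (Suc k)))"
      "snd (P (N (Suc k))) a' b'" "(p (N (Suc k)) (N k) a', F (Suc k) a') = (fst ab, z (Suc k))"
      "(p (N (Suc k)) (N k) b', F (Suc k) b') = (snd ab, w (Suc k))"
      by (rule poset_quotient_map_liftE[OF quotient_pullback])
    then show "\<exists>ab'. over (Suc k) ab' \<and> p (N (Suc k)) (N k) (fst ab') = fst ab \<and>
        p (N (Suc k)) (N k) (snd ab') = snd ab"
      unfolding over_def by (intro exI[of _ "(a', b')"]) simp
  qed
  then obtain AB where "\<And>k. over k (AB k) \<and>
      p (N (Suc k)) (N k) (fst (AB (Suc k))) = fst (AB k) \<and>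
      p (N (Suc k)) (N k) (snd (AB (Suc k))) = snd (AB k)" by blast
  then show ?thesis using that[of "fst \<circ> AB" "snd \<circ> AB"] unfolding over_def by simp
qed

lemma induced_liftE:
  assumes z: "z \<in> invlim_set H h" and w: "w \<in> invlim_set H h"
    and zw: "\<And>n. snd (H n) (z n) (w n)"
  obtains x y where "x \<in> invlim_set P p" "y \<in> invlim_set P p" "\<And>n. snd (P n) (x n) (y n)"
    "induced x = z" "induced y = w"
proof -
  obtain a b where a_mem: "\<And>k. a k \<in> fst (P (N k))" and b_mem: "\<And>k. b k \<in> fst (P (N k))"
    and ab: "\<And>k. snd (P (N k)) (a k) (b k)" and Fa: "\<And>k. F k (a k) = z k" and Fb: "\<And>k. F k (b k) = w k"
    and a_thread: "\<And>k. p (N (Suc k)) (N k) (a (Suc k)) = a k"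
    and b_thread: "\<And>k. p (N (Suc k)) (N k) (b (Suc k)) = b k"
    using levelwise_lift_pairsE[OF z w zw] by blast
  obtain x where x: "x \<in> invlim_set P p" "\<And>k. x (N k) = a k"
    using invlim_set_extend_subseq[OF inverse_P strict_mono_N a_mem a_thread] by blast
  obtain y where y: "y \<in> invlim_set P p" "\<And>k. y (N k) = b k"
    using invlim_set_extend_subseq[OF inverse_P strict_mono_N b_mem b_thread] by blast
  have "snd (P n) (x n) (y n)" for n
  proof -
    have "n \<le> N n" using strict_mono_N by (rule strict_mono_imp_increasing)
    then have "snd (P n) (bonding p (N n) n (x (N n))) (bonding p (N n) n (y (N n)))"
      unfolding x(2) y(2) using bonding_mono[OF inverse_P _ a_mem b_mem ab] by blast
    then show ?thesis using invlim_set_bonding[OF inverse_P] x(1) y(1) \<open>n \<le> N n\<close> by simp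
  qed
  moreover have "induced x = z" "induced y = w" unfolding induced_def x(2) y(2) Fa Fb by simp_all
  ultimately show ?thesis using x(1) y(1) that by blast
qed

lemma quotient_map_induced: "poset_quotient_map (invlim P p) (invlim H h) induced"
  unfolding poset_quotient_map_def invlim_def fst_conv snd_conv
proof (intro conjI ballI impI allI)
  show "induced ` invlim_set P p = invlim_set H h"
  proof (intro equalityI subsetI)
    fix z assume z: "z \<in> invlim_set H h"
    have "snd (H n) (z n) (z n)" for n
    proof (rule is_poset_refl)
      show "is_poset (H n)" using inverse_seq_fin_poset[OF inverse_H] by (simp add: fin_poset_def)
      show "z n \<in> fst (H n)" using z by (simp add: invlim_set_def)
    qed
    then obtain x where "x \<in> invlim_set P p" "induced x = z" using induced_liftE[OF z z] by metis
    then show "z \<in> induced ` invlim_set P p" by blast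
  qed (auto intro: induced_mem_invlim_set)
next
  fix x y n assume "x \<in> invlim_set P p" "y \<in> invlim_set P p" "\<forall>n. snd (P n) (x n) (y n)"
  then show "snd (H n) (induced x n) (induced y n)" by (simp add: induced_mono)
next
  fix z w assume "z \<in> invlim_set H h" "w \<in> invlim_set H h" "\<forall>n. snd (H n) (z n) (w n)"
  then show "\<exists>x\<in>invlim_set P p. \<exists>y\<in>invlim_set P p. (\<forall>n. snd (P n) (x n) (y n)) \<and> induced x = z \<and> induced y = w"
    by (metis induced_liftE)
qed

lemma continuous_map_induced: "continuous_map (invlim_top P p) (invlim_top H h) induced"
  unfolding invlim_top_def continuous_map_in_subtopology
proof
  let ?X = "subtopology (product_topology (\<lambda>n. discrete_topology (fst (P n))) UNIV) (invlim_set P p)"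
  show "continuous_map ?X (product_topology (\<lambda>n. discrete_topology (fst (H n))) UNIV) induced"
    unfolding continuous_map_componentwise_UNIV
  proof
    fix k
    have "continuous_map ?X (discrete_topology (fst (P (N k)))) (\<lambda>x. x (N k))"
      by (intro continuous_map_from_subtopology continuous_map_product_projection) simp
    moreover have "continuous_map (discrete_topology (fst (P (N k)))) (discrete_topology (fst (H k))) (F k)"
      using poset_quotient_map_mem[OF quotient_level] by auto
    ultimately show "continuous_map ?X (discrete_topology (fst (H k))) (\<lambda>x. induced x k)"
      unfolding induced_def by (rule continuous_map_compose[unfolded o_def])
  qed
  show "induced \<in> topspace ?X \<rightarrow> invlim_set H h"
    using induced_mem_invlim_set by auto
qed

end

theorem mainTheorem5:
  fixes H :: "nat \<Rightarrow> 'b poset" and h :: "nat \<Rightarrow> nat \<Rightarrow> 'b \<Rightarrow> 'b"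
    and P :: "nat \<Rightarrow> 'a poset" and p :: "nat \<Rightarrow> nat \<Rightarrow> 'a \<Rightarrow> 'a"
  assumes "inverse_seq H h"
    and "fraisse_seq P p"
  shows "\<exists>f. poset_quotient_map (invlim P p) (invlim H h) f \<and>
             continuous_map (invlim_top P p) (invlim_top H h) f"
proof -
  obtain N F where "strict_mono N" "\<And>k. poset_quotient_map (P (N k)) (H k) (F k)"
    "\<And>k. poset_quotient_map (P (N (Suc k)))
           (poset_pullback (P (N k)) (H (Suc k)) (F k) (h (Suc k) k))
           (\<lambda>x. (p (N (Suc k)) (N k) x, F (Suc k) x))"
    using fraisse_seq_levelwise_quotients[OF assms] by blast
  then interpret levelwise_quotient P p H h N F
    using \<open>inverse_seq H h\<close> fraisse_seq_inverse_seq[OF \<open>fraisse_seq P p\<close>] by unfold_locales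
  show ?thesis using quotient_map_induced continuous_map_induced by blast
qed

end
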